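(* Let $n>1$ be a natural number that is not a power of $2$. Then there exists a non-regular lattice tiling of $\mathbb{R}^n$ by $n$-double-crosses.
   Context: Lee distance on $Z^n$: $\rho_L(v,w)=\sum_i|v_i-w_i|$; $S_{n,1}(v)=\{w:\rho_L(v,w)\le 1\}$; the double-sphere is $DS_{n,1}(v,w)=S_{n,1}(v)\cup S_{n,1}(w)$ for $\rho_L(v,w)=1$ (it has $4n$ points). The $n$-double-cross is the cluster of $4n$ unit cubes (cubes $c+[-\tfrac12,\tfrac12]^n$) centered at the points of a double-sphere $DS_{n,1}$. A lattice tiling of $\mathbb{R}^n$ by a cluster $C$ is a family $\{C+l;\ l\in\mathcal{L}\}$, $\mathcal{L}$ a lattice, of sets with disjoint interiors covering $\mathbb{R}^n$. Two unit cubes with centers $c,c'$ are neighbors if $|c_i-c_i'|=1$ for one index $i$ and $c_j=c_j'$ for $j\ne i$. The tiling is non-regular if two cubes from different tiles have an $(n-1)$-dimensional intersection but are not neighbors. *)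

theory Defs
  imports "HOL-Analysis.Analysis"
begin

text \<open>Points of Z^n are int^'n, points of R^n are real^'n; n = CARD('n).\<close>

definition lee_dist :: "int^'n \<Rightarrow> int^'n \<Rightarrow> int" where
  "lee_dist v w = (\<Sum>i\<in>UNIV. \<bar>v$i - w$i\<bar>)"

definition lee_sphere1 :: "int^'n \<Rightarrow> (int^'n) set" where
  "lee_sphere1 v = {w. lee_dist v w \<le> 1}"

definition double_sphere :: "int^'n \<Rightarrow> int^'n \<Rightarrow> (int^'n) set" where
  "double_sphere v w = lee_sphere1 v \<union> lee_sphere1 w"

definition to_real :: "int^'n \<Rightarrow> real^'n" where
  "to_real v = (\<chi> i. of_int (v$i))"

definition unit_cube :: "real^'n \<Rightarrow> (real^'n) set" where
  "unit_cube c = {x. \<forall>i. \<bar>x$i - c$i\<bar> \<le> 1/2}"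

definition cluster :: "(int^'n) set \<Rightarrow> (real^'n) set" where
  "cluster D = (\<Union>c\<in>D. unit_cube (to_real c))"

text \<open>A cluster is an n-double-cross if it consists of the cubes centred at
  the points of some double-sphere DS(v,w) with Lee distance of v and w equal to 1.\<close>
definition is_double_sphere :: "(int^'n) set \<Rightarrow> bool" where
  "is_double_sphere D \<longleftrightarrow> (\<exists>v w. lee_dist v w = 1 \<and> D = double_sphere v w)"

definition is_lattice :: "(real^'n) set \<Rightarrow> bool" where
  "is_lattice L \<longleftrightarrow> (\<exists>B::real^'n^'n. invertible B \<and> L = {B *v to_real k | k. True})"

definition translate :: "real^'n \<Rightarrow> (real^'n) set \<Rightarrow> (real^'n) set" where
  "translate l S = (\<lambda>x. x + l) ` S"

definition lattice_tiling :: "(real^'n) set \<Rightarrow> (real^'n) set \<Rightarrow> bool" where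
  "lattice_tiling C L \<longleftrightarrow> is_lattice L \<and>
     (\<Union>l\<in>L. translate l C) = UNIV \<and>
     (\<forall>l\<in>L. \<forall>l'\<in>L. l \<noteq> l' \<longrightarrow> interior (translate l C) \<inter> interior (translate l' C) = {})"

definition cube_neighbors :: "real^'n \<Rightarrow> real^'n \<Rightarrow> bool" where
  "cube_neighbors c c' \<longleftrightarrow> (\<exists>i. \<bar>c$i - c'$i\<bar> = 1 \<and> (\<forall>j. j \<noteq> i \<longrightarrow> c$j = c'$j))"

definition non_regular :: "(int^'n) set \<Rightarrow> (real^'n) set \<Rightarrow> bool" where
  "non_regular D L \<longleftrightarrow> (\<exists>l\<in>L. \<exists>l'\<in>L. \<exists>c\<in>D. \<exists>c'\<in>D. l \<noteq> l' \<and>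
     aff_dim (unit_cube (to_real c + l) \<inter> unit_cube (to_real c' + l')) = int CARD('n) - 1 \<and>
     \<not> cube_neighbors (to_real c + l) (to_real c' + l'))"

end

theory Submission
  imports Defs
begin

text \<open>
  Label the coordinate directions bijectively by the residues \<open>0, \<dots>, n - 1\<close> modulo \<open>n\<close> and
  call the direction labelled \<open>0\<close> vertical. The double-sphere of the origin and the vertical unit
  vector consists of a vertical column of four points and, for every other direction \<open>j\<close>, two
  arms of two points over \<open>\<plusminus>e\<^sub>j\<close>. Translate it by the lattice points whose horizontal part
  \<open>m\<close> has label sum \<open>\<Sum>\<^sub>i \<sigma>(i) m\<^sub>i\<close> divisible by \<open>n\<close> and whose vertical part is
  \<open>h(m) + 4r\<close>, where \<open>h(m) = \<Sum>\<^sub>i tilt(i) m\<^sub>i\<close> with \<open>tilt(i) = 1/2 + \<sigma>(i)/n\<close>.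
  Over a horizontal base point whose label sum is divisible by \<open>n\<close>, the vertical line is filled by
  columns of height 4. Otherwise it is filled by arms over \<open>+e\<^sub>j\<close> and \<open>-e\<^sub>j\<^sub>'\<close> with
  \<open>\<sigma>(j) + \<sigma>(j') = n\<close>; the tilts of such opposite directions add up to 2, so these two arms
  of height 2 alternate with period 4. Hence the translated cubes tile \<open>\<real>\<^sup>n\<close>. As the tilts
  are not integers, the tile translated by \<open>m = 2e\<^sub>1 - e\<^sub>2\<close> is lifted by \<open>h(m) = 1/2\<close>,
  so one of its cubes shares a facet with a cube of the original tile without being its neighbour.
\<close>

section \<open>Unit cubes\<close>

lemma closed_unit_cube: "closed (unit_cube (c :: real^'n))"
proof -
  have "unit_cube c = (\<Inter>i. {x. \<bar>x$i - c$i\<bar> \<le> 1/2})"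
    unfolding unit_cube_def by auto
  moreover have "closed {x::real^'n. \<bar>x$i - c$i\<bar> \<le> 1/2}" for i
    by (intro closed_Collect_le continuous_intros)
  ultimately show ?thesis by auto
qed

lemma interior_Union_closed_eq_empty:
  fixes F :: "'a::topological_space set set"
  assumes "finite F" "\<And>S. S \<in> F \<Longrightarrow> closed S" "\<And>S. S \<in> F \<Longrightarrow> interior S = {}"
  shows "interior (\<Union>F) = {}"
  using assms
proof (induction F rule: finite_induct)
  case (insert S F)
  then show ?case using interior_closed_Un_empty_interior[of S "\<Union>F"] by auto
qed simp

lemma translate_unit_cube: "translate l (unit_cube c) = unit_cube (c + l)"
  unfolding translate_def unit_cube_def
  by (auto simp: algebra_simps intro!: image_eqI[where x = "_ - l"])

lemma translate_cluster: "translate l (cluster D) = (\<Union>c\<in>D. unit_cube (to_real c + l))"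
  unfolding cluster_def by (simp add: translate_unit_cube[symmetric] translate_def image_UN)

lemma interior_unit_cube_Int_eq_empty:
  assumes "1 \<le> \<bar>p$i - q$i\<bar>"
  shows "interior (unit_cube p \<inter> unit_cube q) = {}"
proof -
  have "unit_cube p \<inter> unit_cube q \<subseteq> {x. x$i = (p$i + q$i)/2}"
    using assms by (auto simp: unit_cube_def abs_if split: if_splits dest!: spec[of _ i])
  then show ?thesis using interior_mono interior_standard_hyperplane by blast
qed

lemma aff_dim_unit_cube_Int_facet:
  fixes p q :: "real^'n"
  assumes "\<bar>p$i - q$i\<bar> = 1" and "\<And>k. k \<noteq> i \<Longrightarrow> \<bar>p$k - q$k\<bar> < 1"
  shows "aff_dim (unit_cube p \<inter> unit_cube q) = int CARD('n) - 1"
proof -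
  define S where "S = unit_cube p \<inter> unit_cube q"
  define H :: "(real^'n) set" where "H = {x. axis i 1 \<bullet> x = (p$i + q$i)/2}"
  define z where "z = (p + q) /\<^sub>R 2"
  define e where "e = Min (insert 1 ((\<lambda>k. 1 - \<bar>p$k - q$k\<bar>) ` (UNIV - {i}))) / 2"
  have e_pos: "0 < e"
    unfolding e_def using assms(2) by (subst zero_less_divide_iff, subst Min_gr_iff) auto
  have e_le: "e \<le> (1 - \<bar>p$k - q$k\<bar>) / 2" if "k \<noteq> i" for k
    unfolding e_def using that by (intro divide_right_mono Min_le) auto
  have aff_dim_H: "aff_dim H = int CARD('n) - 1"
    unfolding H_def by (subst aff_dim_hyperplane) (simp_all add: axis_eq_0_iff)
  have "S \<subseteq> H"
    using assms(1)
    by (auto simp: S_def H_def inner_axis' unit_cube_def abs_if split: if_splits dest!: spec[of _ i])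
  moreover have "H \<inter> ball z e \<subseteq> S"
  proof
    fix x assume x: "x \<in> H \<inter> ball z e"
    have near: "\<bar>x$k - (p$k + q$k) / 2\<bar> < e" for k
      using component_le_norm_cart[of "x - z" k] x by (simp add: z_def dist_norm norm_minus_commute)
    have "\<bar>x$k - p$k\<bar> \<le> 1/2 \<and> \<bar>x$k - q$k\<bar> \<le> 1/2" for k
    proof (cases "k = i")
      case True
      have "x$i = (p$i + q$i) / 2"
        using x by (simp add: H_def inner_axis')
      with True assms(1) show ?thesis by simp argo
    next
      case False
      with e_le[OF False] near[of k] show ?thesis by argo
    qed
    then show "x \<in> S" by (simp add: S_def unit_cube_def)
  qed
  moreover have "aff_dim (H \<inter> ball z e) = aff_dim H"
  proof (rule aff_dim_convex_Int_open)
    have "z \<in> H \<inter> ball z e"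
      using e_pos by (simp add: H_def z_def inner_axis')
    then show "H \<inter> ball z e \<noteq> {}" by blast
  qed (auto simp only: H_def convex_hyperplane open_ball)
  ultimately show ?thesis
    using aff_dim_subset[of S H] aff_dim_subset[of "H \<inter> ball z e" S] aff_dim_H
    by (simp add: S_def)
qed

lemma not_cube_neighbors:
  assumes "i \<noteq> j" "p$i \<noteq> q$i" "p$j \<noteq> q$j"
  shows "\<not> cube_neighbors p q"
  using assms unfolding cube_neighbors_def by metis

section \<open>Lee spheres of radius 1\<close>

lemma axis_nth_neq [simp]: "i \<noteq> k \<Longrightarrow> axis k x $ i = 0"
  by (simp add: axis_def)

lemma sum_abs_axis: "(\<Sum>i\<in>UNIV. \<bar>axis j s $ i\<bar>) = \<bar>s :: 'a::linordered_idom\<bar>"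
proof -
  have "(\<Sum>i\<in>UNIV. \<bar>axis j s $ i\<bar>) = (\<Sum>i\<in>UNIV. if i = j then \<bar>s\<bar> else 0)"
    by (intro sum.cong) (auto simp: axis_def)
  then show ?thesis by simp
qed

lemma sum_abs_le_1_cases:
  fixes u :: "int^'n"
  assumes "(\<Sum>i\<in>UNIV. \<bar>u$i\<bar>) \<le> 1"
  shows "u = 0 \<or> (\<exists>j s. s \<in> {-1, 1} \<and> u = axis j s)"
proof (cases "u = 0")
  case False
  then obtain j where j: "u$j \<noteq> 0" by (metis vec_eq_iff zero_index)
  have "(\<Sum>i\<in>UNIV. \<bar>u$i\<bar>) = \<bar>u$j\<bar> + (\<Sum>i\<in>UNIV-{j}. \<bar>u$i\<bar>)"
    by (simp add: sum.remove)
  moreover have "0 \<le> (\<Sum>i\<in>UNIV-{j}. \<bar>u$i\<bar>)" by (simp add: sum_nonneg)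
  ultimately have "\<bar>u$j\<bar> = 1" and "(\<Sum>i\<in>UNIV-{j}. \<bar>u$i\<bar>) = 0"
    using assms j by linarith+
  then have "u = axis j (u$j)" and "u$j \<in> {-1, 1}"
    by (auto simp: vec_eq_iff axis_def sum_nonneg_eq_0_iff abs_if split: if_splits)
  then show ?thesis by blast
qed simp

lemma lee_sphere1_eq: "lee_sphere1 v = insert v {v + axis j s | j s. s \<in> {-1, 1}}"
proof (intro set_eqI iffI)
  fix w assume "w \<in> lee_sphere1 v"
  then have "(\<Sum>i\<in>UNIV. \<bar>(w - v)$i\<bar>) \<le> 1"
    by (simp add: lee_sphere1_def lee_dist_def abs_minus_commute)
  from sum_abs_le_1_cases[OF this]
  show "w \<in> insert v {v + axis j s | j s. s \<in> {-1, 1}}"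
    by (auto simp: algebra_simps)
next
  fix w assume "w \<in> insert v {v + axis j s | j s. s \<in> {-1, 1}}"
  then show "w \<in> lee_sphere1 v"
    by (auto simp: lee_sphere1_def lee_dist_def sum_abs_axis)
qed

lemma finite_lee_sphere1: "finite (lee_sphere1 v)"
proof -
  have "{v + axis j s | j s. s \<in> {-1, 1}} = (\<lambda>(j, s). v + axis j s) ` (UNIV \<times> {-1, 1})"
    by auto
  then show ?thesis by (simp add: lee_sphere1_eq)
qed

lemma finite_double_sphere: "finite (double_sphere v w)"
  by (simp add: double_sphere_def finite_lee_sphere1)

lemma mem_double_sphere_axis:
  fixes c :: "int^'n"
  shows "c \<in> double_sphere 0 (axis a 1) \<longleftrightarrow>
    (\<exists>t \<in> {-1..2}. c = axis a t) \<or>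
    (\<exists>j s t. j \<noteq> a \<and> s \<in> {-1, 1} \<and> t \<in> {0, 1} \<and> c = axis j s + axis a t)"
  (is "_ \<longleftrightarrow> ?column \<or> ?arm")
proof -
  have axis_add: "axis a s + axis a t = axis a (s + t)" for s t :: int
    by (simp add: vec_eq_iff axis_def)
  have axis_0: "axis k 0 = (0 :: int^'n)" for k
    by simp
  have DS: "double_sphere 0 (axis a 1) =
      {0, axis a 1} \<union> {axis j s | j s. s \<in> {-1, 1}} \<union> {axis j s + axis a 1 | j s. s \<in> {-1, 1}}"
    unfolding double_sphere_def lee_sphere1_eq by (auto simp: add.commute)
  show ?thesis
  proof
    assume "c \<in> double_sphere 0 (axis a 1)"
    then consider "c = 0" | "c = axis a 1" | j s where "s \<in> {-1, 1}" "c = axis j s"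
      | j s where "s \<in> {-1, 1}" "c = axis j s + axis a 1"
      unfolding DS by blast
    then show "?column \<or> ?arm"
    proof cases
      case 1
      then show ?thesis by (intro disjI1 bexI[of _ 0]) auto
    next
      case 2
      then show ?thesis by (intro disjI1 bexI[of _ 1]) auto
    next
      case (3 j s)
      show ?thesis
      proof (cases "j = a")
        case True
        then show ?thesis using 3 by (intro disjI1 bexI[of _ s]) auto
      next
        case False
        then show ?thesis using 3 by (intro disjI2 exI[of _ j] exI[of _ s] exI[of _ 0]) simp
      qed
    next
      case (4 j s)
      show ?thesis
      proof (cases "j = a")
        case True
        then have "c = axis a (s + 1)" using 4 axis_add by simp
        moreover have "s + 1 \<in> {-1..2}" using 4 by auto
        ultimately show ?thesis by blast
      qed (use 4 in blast)
    qed
  next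
    assume "?column \<or> ?arm"
    then show "c \<in> double_sphere 0 (axis a 1)"
    proof
      assume ?column
      then obtain t where "t \<in> {-1..2}" "c = axis a t"
        by blast
      moreover have "{-1..2} = {-1, 0, 1, 2 :: int}"
        by auto
      ultimately consider "c = axis a (-1)" | "c = 0" | "c = axis a 1" | "c = axis a 1 + axis a 1"
        using axis_add[of 1 1] by force
      then show ?thesis
        unfolding DS by cases blast+
    next
      assume ?arm
      then obtain j s t where "s \<in> {-1, 1}" "t \<in> {0, 1}" "c = axis j s + axis a t"
        by blast
      then show ?thesis unfolding DS by (auto simp: axis_0) blast+
    qed
  qed
qed

lemma dvd_signed_diff_cases:
  fixes x y s s' N :: int
  assumes "0 < x" "x < N" "0 < y" "y < N" "s \<in> {-1, 1}" "s' \<in> {-1, 1}"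
    and "N dvd y * s' - x * s"
  shows "(x = y \<and> s = s') \<or> (x + y = N \<and> s' = -s)"
proof -
  have small_multiple: "z = 0" if "N dvd z" "\<bar>z\<bar> < N" for z
    using that dvd_imp_le_int[of z N] by fastforce
  show ?thesis
  proof (cases "s' = s")
    case True
    then have "N dvd y - x"
      using assms(5,7) by (auto simp: dvd_diff_commute simp flip: right_diff_distrib')
    then have "y - x = 0" using small_multiple[of "y - x"] assms(1-4) by simp
    then show ?thesis using True by simp
  next
    case False
    then have "s' = -s" using assms(5,6) by auto
    then have "y * s' - x * s = - (s * (x + y))"
      by (simp add: algebra_simps)
    with assms(7) have "N dvd s * (x + y)"
      by (metis dvd_minus_iff)
    with assms(5) have "N dvd x + y"
      by (metis dvd_minus_iff empty_iff insertE mult_1 mult_minus1)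
    then have "N dvd (x + y) - N"
      by (simp add: dvd_diff)
    then have "x + y = N" using small_multiple[of "x + y - N"] assms(1-4) by simp
    with \<open>s' = -s\<close> show ?thesis by simp
  qed
qed

lemma int_eq_if_abs_diff_less_1: "\<bar>(of_int a :: real) - of_int b\<bar> < 1 \<Longrightarrow> a = b"
  by linarith

lemma ex_int_offset_in_interval:
  fixes d :: real
  assumes "0 < d"
  obtains r :: int where "b \<le> y - d * of_int r" "y - d * of_int r < b + d"
proof
  define r where "r = \<lfloor>(y - b) / d\<rfloor>"
  have "of_int r \<le> (y - b) / d" "(y - b) / d < of_int r + 1"
    unfolding r_def by linarith+
  with assms show "b \<le> y - d * of_int r" "y - d * of_int r < b + d"
    by (simp_all add: field_simps)
qed

lemma ex_0_1_near:
  fixes z :: real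
  assumes "-1/2 \<le> z" "z \<le> 3/2"
  obtains t :: int where "t \<in> {0, 1}" "\<bar>z - of_int t\<bar> \<le> 1/2"
proof (cases "z \<le> 1/2")
  case True
  then show thesis using assms by (intro that[of 0]) (auto simp: abs_le_iff)
next
  case False
  then show thesis using assms by (intro that[of 1]) (auto simp: abs_if)
qed

lemma invertible_matrix_if_ker_0:
  fixes f :: "real^'n \<Rightarrow> real^'n"
  assumes "linear f" "\<And>x. f x = 0 \<Longrightarrow> x = 0"
  shows "invertible (matrix f)"
  using assms by (simp add: invertible_left_inverse matrix_left_invertible_ker matrix_works)

section \<open>The tiling\<close>

locale double_cross_tiling =
  fixes \<sigma> :: "'n::finite \<Rightarrow> nat"
  assumes bij_\<sigma>: "bij_betw \<sigma> UNIV {..<CARD('n)}"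
    and card_ge_3: "3 \<le> CARD('n)"
begin

definition dir :: "nat \<Rightarrow> 'n" where "dir k = inv_into UNIV \<sigma> k"

lemma \<sigma>_dir: "k < CARD('n) \<Longrightarrow> \<sigma> (dir k) = k"
  unfolding dir_def using bij_\<sigma> by (simp add: bij_betw_inv_into_right)

lemma \<sigma>_less: "\<sigma> i < CARD('n)"
  using bij_\<sigma> by (auto simp: bij_betw_def)

lemma \<sigma>_eq_iff: "\<sigma> i = \<sigma> j \<longleftrightarrow> i = j"
  using bij_\<sigma> by (auto simp: bij_betw_def inj_on_def)

definition vert :: 'n where "vert = dir 0"

lemma \<sigma>_vert: "\<sigma> vert = 0"
  unfolding vert_def using \<sigma>_dir card_ge_3 by simp

lemma \<sigma>_pos: "i \<noteq> vert \<Longrightarrow> 0 < \<sigma> i"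
  using \<sigma>_vert \<sigma>_eq_iff by (metis gr0I)

definition dir1 :: 'n where "dir1 = dir 1"

definition dir2 :: 'n where "dir2 = dir 2"

lemma \<sigma>_dir1: "\<sigma> dir1 = 1"
  using card_ge_3 by (simp add: dir1_def \<sigma>_dir)

lemma \<sigma>_dir2: "\<sigma> dir2 = 2"
  using card_ge_3 by (simp add: dir2_def \<sigma>_dir)

lemma dirs_distinct: "dir1 \<noteq> vert" "dir2 \<noteq> vert" "dir1 \<noteq> dir2"
  using \<sigma>_dir1 \<sigma>_dir2 \<sigma>_vert by auto

definition label_sum :: "int^'n \<Rightarrow> int" where
  "label_sum m = (\<Sum>i\<in>UNIV. int (\<sigma> i) * m$i)"

definition tilt :: "'n \<Rightarrow> real" where
  "tilt i = (if i = vert then 0 else 1/2 + real (\<sigma> i) / real CARD('n))"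

definition height :: "int^'n \<Rightarrow> real" where
  "height m = (\<Sum>i\<in>UNIV. tilt i * of_int (m$i))"

definition lattice_point :: "int^'n \<Rightarrow> int \<Rightarrow> real^'n" where
  "lattice_point m r = (\<chi> i. if i = vert then height m + 4 * of_int r else of_int (m$i))"

definition tiling_lattice :: "(real^'n) set" where
  "tiling_lattice = {lattice_point m r | m r. int CARD('n) dvd label_sum m}"

abbreviation DS :: "(int^'n) set" where
  "DS \<equiv> double_sphere 0 (axis vert 1)"

lemma label_sum_add: "label_sum (x + y) = label_sum x + label_sum y"
  unfolding label_sum_def by (simp add: sum.distrib algebra_simps)

lemma label_sum_diff: "label_sum (x - y) = label_sum x - label_sum y"
  unfolding label_sum_def by (simp add: sum_subtractf algebra_simps)

lemma label_sum_axis: "label_sum (axis j s) = int (\<sigma> j) * s"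
  unfolding label_sum_def axis_def by (simp add: if_distrib cong: if_cong)

lemma height_add: "height (x + y) = height x + height y"
  unfolding height_def by (simp add: sum.distrib algebra_simps)

lemma height_diff: "height (x - y) = height x - height y"
  unfolding height_def by (simp add: sum_subtractf algebra_simps)

lemma height_axis: "height (axis j s) = tilt j * of_int s"
  unfolding height_def axis_def by (simp add: if_distrib cong: if_cong)

lemma label_sum_remove_dir1: "label_sum m = m $ dir1 + (\<Sum>j\<in>UNIV-{dir1}. int (\<sigma> j) * m$j)"
  unfolding label_sum_def by (subst sum.remove[of UNIV dir1]) (simp_all add: \<sigma>_dir1)

lemma label_sum_cong: "(\<And>i. i \<noteq> vert \<Longrightarrow> x$i = y$i) \<Longrightarrow> label_sum x = label_sum y"
  unfolding label_sum_def by (intro sum.cong refl) (metis \<sigma>_vert mult_zero_left of_nat_0)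

lemma height_cong: "(\<And>i. i \<noteq> vert \<Longrightarrow> x$i = y$i) \<Longrightarrow> height x = height y"
  unfolding height_def by (intro sum.cong) (auto simp: tilt_def)

lemma lattice_point_cong:
  assumes "\<And>i. i \<noteq> vert \<Longrightarrow> x$i = y$i"
  shows "lattice_point x r = lattice_point y r"
  using assms height_cong[OF assms] by (simp add: lattice_point_def vec_eq_iff)

lemma lattice_point_vert: "lattice_point m r $ vert = height m + 4 * of_int r"
  and lattice_point_nonvert: "i \<noteq> vert \<Longrightarrow> lattice_point m r $ i = of_int (m$i)"
  by (simp_all add: lattice_point_def)

lemma tilt_opposite:
  assumes "i \<noteq> vert" "j \<noteq> vert" "\<sigma> i + \<sigma> j = CARD('n)"
  shows "tilt i + tilt j = 2"
proof -
  have "real (\<sigma> i) / real CARD('n) + real (\<sigma> j) / real CARD('n) = 1"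
    using assms(3) card_ge_3 by (simp flip: add_divide_distrib of_nat_add)
  then show ?thesis using assms(1,2) by (simp add: tilt_def)
qed

lemma DS_cases:
  assumes "c \<in> DS"
  obtains (column) t where "t \<in> {-1..2}" "c = axis vert t"
    | (arm) j s t where "j \<noteq> vert" "s \<in> {-1, 1}" "t \<in> {0, 1}" "c = axis j s + axis vert t"
  using assms unfolding mem_double_sphere_axis by blast

lemma label_sum_arm: "j \<noteq> vert \<Longrightarrow> label_sum (axis j s + axis vert t) = int (\<sigma> j) * s"
  by (simp add: label_sum_add label_sum_axis \<sigma>_vert)

lemma height_arm: "j \<noteq> vert \<Longrightarrow> height (axis j s + axis vert t) = tilt j * of_int s"
  by (simp add: height_add height_axis tilt_def)

lemma height_column: "height (axis vert t) = 0"
  by (simp add: height_axis tilt_def)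

lemma not_dvd_label_sum_arm:
  assumes "j \<noteq> vert" "s \<in> {-1, 1}"
  shows "\<not> int CARD('n) dvd int (\<sigma> j) * s"
  using assms \<sigma>_pos[OF assms(1)] \<sigma>_less[of j] zdvd_not_zless[of "int (\<sigma> j)" "int CARD('n)"]
  by auto

lemma congruent_DS_cases:
  assumes c: "c \<in> DS" and c': "c' \<in> DS"
    and dvd: "int CARD('n) dvd label_sum c' - label_sum c"
  obtains (same_column) "\<forall>i. i \<noteq> vert \<longrightarrow> c$i = c'$i" "height c' = height c" "\<bar>c'$vert - c$vert\<bar> \<le> 3"
    | (opposite_arms) "height c' - height c \<in> {-2, 2}" "\<bar>c'$vert - c$vert\<bar> \<le> 1"
proof -
  have column_arm_incongruent:
    "\<not> int CARD('n) dvd label_sum (axis j s + axis vert u) - label_sum (axis vert t)"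
    if "j \<noteq> vert" "s \<in> {-1, 1}" for j s t u
    using not_dvd_label_sum_arm[OF that] that(1) by (simp add: label_sum_arm label_sum_axis \<sigma>_vert)
  show thesis
  using c proof (cases rule: DS_cases)
    case (column t)
    show thesis
    using c' proof (cases rule: DS_cases)
      case (column t')
      then show thesis using \<open>t \<in> {-1..2}\<close> \<open>c = axis vert t\<close>
        by (intro same_column) (auto simp: height_column)
    next
      case (arm j' s' t')
      then show thesis using column_arm_incongruent[of j' s' t' t] dvd \<open>c = axis vert t\<close> by simp
    qed
  next
    case (arm j s t)
    show thesis
    using c' proof (cases rule: DS_cases)
      case (column t')
      then show thesis using column_arm_incongruent[of j s t t'] dvd \<open>c = _\<close> \<open>j \<noteq> vert\<close> \<open>s \<in> _\<close>
        by (simp add: dvd_diff_commute)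
    next
      case (arm j' s' t')
      have "0 < int (\<sigma> j)" "int (\<sigma> j) < int CARD('n)" "0 < int (\<sigma> j')" "int (\<sigma> j') < int CARD('n)"
        using \<sigma>_pos[OF \<open>j \<noteq> vert\<close>] \<sigma>_pos[OF \<open>j' \<noteq> vert\<close>] \<sigma>_less[of j] \<sigma>_less[of j'] by auto
      moreover have "int CARD('n) dvd int (\<sigma> j') * s' - int (\<sigma> j) * s"
        using dvd \<open>c = _\<close> \<open>c' = _\<close> \<open>j \<noteq> vert\<close> \<open>j' \<noteq> vert\<close> by (simp add: label_sum_arm)
      ultimately consider "j = j'" "s = s'" | "\<sigma> j + \<sigma> j' = CARD('n)" "s' = -s"
        using dvd_signed_diff_cases[OF _ _ _ _ \<open>s \<in> _\<close> \<open>s' \<in> _\<close>] \<sigma>_eq_iff by fastforce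
      then show thesis
      proof cases
        case 1
        then show thesis using arm \<open>c = _\<close> \<open>t \<in> _\<close>
          by (intro same_column) (auto simp: height_arm)
      next
        case 2
        have "height c' - height c = tilt j' * of_int s' - tilt j * of_int s"
          using arm \<open>c = _\<close> \<open>j \<noteq> vert\<close> by (simp add: height_arm)
        also have "\<dots> = - of_int s * (tilt j + tilt j')"
          using 2 by (simp add: algebra_simps)
        also have "\<dots> = - 2 * of_int s"
          using 2 tilt_opposite[OF \<open>j \<noteq> vert\<close> \<open>j' \<noteq> vert\<close>] by simp
        finally show thesis using arm \<open>c = _\<close> \<open>j \<noteq> vert\<close> \<open>s \<in> _\<close> \<open>t \<in> _\<close>
          by (intro opposite_arms) auto
      qed
    qed
  qed
qed

lemma tiling_latticeE:
  assumes "l \<in> tiling_lattice"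
  obtains m r where "l = lattice_point m r" "int CARD('n) dvd label_sum m"
  using assms unfolding tiling_lattice_def by blast

lemma lattice_translates_apart:
  assumes c: "c \<in> DS" and c': "c' \<in> DS"
    and l: "l \<in> tiling_lattice" and l': "l' \<in> tiling_lattice" and "l \<noteq> l'"
  shows "\<exists>i. 1 \<le> \<bar>(to_real c + l)$i - (to_real c' + l')$i\<bar>"
proof (rule ccontr)
  obtain m r where l: "l = lattice_point m r" "int CARD('n) dvd label_sum m"
    using l by (rule tiling_latticeE)
  obtain m' r' where l': "l' = lattice_point m' r'" "int CARD('n) dvd label_sum m'"
    using l' by (rule tiling_latticeE)
  assume "\<not> ?thesis"
  then have near: "\<bar>(to_real c + l)$i - (to_real c' + l')$i\<bar> < 1" for i
    by (simp add: not_le)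
  have same_base: "(c + m)$i = (c' + m')$i" if "i \<noteq> vert" for i
    using near[of i] that by (intro int_eq_if_abs_diff_less_1) (simp add: l l' to_real_def lattice_point_nonvert)
  then have "label_sum (c + m) = label_sum (c' + m')" and "height (c + m) = height (c' + m')"
    by (blast intro: label_sum_cong height_cong)+
  then have "label_sum c' - label_sum c = label_sum m - label_sum m'"
    and height_gap: "height m - height m' = height c' - height c"
    by (simp_all add: label_sum_add height_add algebra_simps)
  with l(2) l'(2) have dvd: "int CARD('n) dvd label_sum c' - label_sum c"
    by (simp add: dvd_diff)
  have vert_gap: "(to_real c + l)$vert - (to_real c' + l')$vert
      = of_int (c$vert - c'$vert + 4 * (r - r')) + (height c' - height c)"
    using height_gap by (simp add: l l' to_real_def lattice_point_vert algebra_simps)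
  from c c' dvd show False
  proof (cases rule: congruent_DS_cases)
    case same_column
    then have "c$vert - c'$vert + 4 * (r - r') = 0"
      using near[of vert] vert_gap by (intro int_eq_if_abs_diff_less_1) simp
    with same_column have "r = r'"
      by presburger
    moreover have "m$i = m'$i" if "i \<noteq> vert" for i
      using same_base[OF that] same_column that by simp
    ultimately have "l = l'"
      using lattice_point_cong l(1) l'(1) by blast
    with \<open>l \<noteq> l'\<close> show False ..
  next
    case opposite_arms
    then obtain e :: int where "e \<in> {-2, 2}" "height c' - height c = of_int e"
      by force
    then have "c$vert - c'$vert + 4 * (r - r') + e = 0"
      using near[of vert] vert_gap by (intro int_eq_if_abs_diff_less_1) simp
    with opposite_arms(2) \<open>e \<in> {-2, 2}\<close> show False
      unfolding abs_le_iff by auto presburger+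
  qed
qed

lemma interior_tiles_disjoint:
  assumes "l \<in> tiling_lattice" "l' \<in> tiling_lattice" "l \<noteq> l'"
  shows "interior (translate l (cluster DS)) \<inter> interior (translate l' (cluster DS)) = {}"
proof -
  define F where "F = (\<lambda>(c, c'). unit_cube (to_real c + l) \<inter> unit_cube (to_real c' + l')) ` (DS \<times> DS)"
  have "translate l (cluster DS) \<inter> translate l' (cluster DS) = \<Union>F"
    unfolding F_def translate_cluster by auto
  moreover have "interior (\<Union>F) = {}"
  proof (rule interior_Union_closed_eq_empty)
    show "finite F" unfolding F_def by (simp add: finite_double_sphere)
    show "closed S" if "S \<in> F" for S
      using that by (auto simp: F_def closed_Int closed_unit_cube)
    show "interior S = {}" if "S \<in> F" for S
    proof -
      obtain c c' where "c \<in> DS" "c' \<in> DS" "S = unit_cube (to_real c + l) \<inter> unit_cube (to_real c' + l')"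
        using \<open>S \<in> F\<close> unfolding F_def by blast
      with lattice_translates_apart[OF _ _ assms] interior_unit_cube_Int_eq_empty show ?thesis
        by metis
    qed
  qed
  ultimately show ?thesis by (simp flip: interior_Int)
qed

definition covered :: "int^'n \<Rightarrow> real \<Rightarrow> bool" where
  "covered p y \<longleftrightarrow> (\<exists>c\<in>DS. \<exists>m r. int CARD('n) dvd label_sum m \<and>
     (\<forall>i. i \<noteq> vert \<longrightarrow> c$i + m$i = p$i) \<and> \<bar>y - (of_int (c$vert) + height m + 4 * of_int r)\<bar> \<le> 1/2)"

lemma covered_by_column:
  assumes "int CARD('n) dvd label_sum p"
  shows "covered p y"
proof -
  obtain r :: int where r: "-3/2 \<le> y - height p - 4 * of_int r" "y - height p - 4 * of_int r < 5/2"
    using ex_int_offset_in_interval[of 4 "-3/2" "y - height p"] by auto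
  define z where "z = y - height p - 4 * of_int r"
  have "- 1 \<le> round z" "round z \<le> 2"
    using r of_int_round_gt[of z] of_int_round_le[of z] unfolding z_def by linarith+
  then have "axis vert (round z) \<in> DS"
    by (auto simp: mem_double_sphere_axis)
  moreover have "\<bar>y - (of_int (round z) + height p + 4 * of_int r)\<bar> \<le> 1/2"
    using of_int_round_abs_le[of z] unfolding z_def by argo
  ultimately show ?thesis
    using assms unfolding covered_def by (intro bexI[of _ "axis vert (round z)"] exI[of _ p] exI[of _ r]) auto
qed

lemma covered_by_arm:
  assumes "j \<noteq> vert" "s \<in> {-1, 1}" "int CARD('n) dvd label_sum m"
    and "\<And>i. i \<noteq> vert \<Longrightarrow> (axis j s + m)$i = p$i"
    and "-1/2 \<le> y - height m - 4 * of_int r" "y - height m - 4 * of_int r \<le> 3/2"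
  shows "covered p y"
proof -
  obtain t where t: "t \<in> {0, 1}" "\<bar>(y - height m - 4 * of_int r) - of_int t\<bar> \<le> 1/2"
    using ex_0_1_near assms(5,6) by blast
  have "axis j s + axis vert t \<in> DS"
    using assms(1,2) t(1) by (auto simp: mem_double_sphere_axis)
  moreover have "\<forall>i. i \<noteq> vert \<longrightarrow> (axis j s + axis vert t)$i + m$i = p$i"
    using assms(4) by simp
  moreover have "\<bar>y - (of_int ((axis j s + axis vert t)$vert) + height m + 4 * of_int r)\<bar> \<le> 1/2"
    using assms(1) t(2) by simp argo
  ultimately show ?thesis
    using assms(3) unfolding covered_def by blast
qed

lemma covered_by_arms:
  assumes "\<not> int CARD('n) dvd label_sum p"
  shows "covered p y"
proof -
  define v where "v = nat (label_sum p mod int CARD('n))"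
  have "0 \<le> label_sum p mod int CARD('n)" "label_sum p mod int CARD('n) < int CARD('n)"
    and "label_sum p mod int CARD('n) \<noteq> 0"
    using card_ge_3 assms by (simp_all add: dvd_eq_mod_eq_0)
  then have v: "0 < v" "v < CARD('n)" "int v = label_sum p mod int CARD('n)"
    unfolding v_def by linarith+
  define j where "j = dir v"
  define j' where "j' = dir (CARD('n) - v)"
  have \<sigma>_j: "\<sigma> j = v" and \<sigma>_j': "\<sigma> j' = CARD('n) - v"
    using v by (simp_all add: j_def j'_def \<sigma>_dir)
  then have "j \<noteq> vert" "j' \<noteq> vert"
    using v \<sigma>_vert by auto
  define m where "m = p - axis j 1"
  define m' where "m' = p + axis j' 1"
  have "label_sum m = label_sum p - label_sum p mod int CARD('n)"
    using v by (simp add: m_def label_sum_diff label_sum_axis \<sigma>_j)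
  then have dvd_m: "int CARD('n) dvd label_sum m"
    by simp
  have "label_sum m' = label_sum m + int CARD('n)"
    using v by (simp add: m_def m'_def label_sum_add label_sum_diff label_sum_axis \<sigma>_j \<sigma>_j' of_nat_diff)
  with dvd_m have dvd_m': "int CARD('n) dvd label_sum m'"
    by simp
  have "height m' = height m + (tilt j + tilt j')"
    by (simp add: m_def m'_def height_add height_diff height_axis)
  then have height_m': "height m' = height m + 2"
    using tilt_opposite[OF \<open>j \<noteq> vert\<close> \<open>j' \<noteq> vert\<close>] v \<sigma>_j \<sigma>_j' by simp
  obtain r :: int where r: "-1/2 \<le> y - height m - 4 * of_int r" "y - height m - 4 * of_int r < 7/2"
    using ex_int_offset_in_interval[of 4 "-1/2" "y - height m"] by auto
  show ?thesis
  proof (cases "y - height m - 4 * of_int r \<le> 3/2")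
    case True
    show ?thesis
      by (rule covered_by_arm[of j 1 m _ _ r]) (use \<open>j \<noteq> vert\<close> dvd_m r True in \<open>simp_all add: m_def\<close>)
  next
    case False
    show ?thesis
      by (rule covered_by_arm[of j' "-1" m' _ _ r])
        (use \<open>j' \<noteq> vert\<close> dvd_m' r False height_m' in \<open>simp_all add: m'_def axis_def\<close>)
  qed
qed

lemma covered: "covered p y"
  using covered_by_column covered_by_arms by blast

lemma tiles_cover: "(\<Union>l\<in>tiling_lattice. translate l (cluster DS)) = UNIV"
proof (intro set_eqI iffI UNIV_I)
  fix x :: "real^'n"
  define p where "p = (\<chi> i. round (x$i))"
  obtain c m r where c: "c \<in> DS" and dvd: "int CARD('n) dvd label_sum m"
    and base: "\<forall>i. i \<noteq> vert \<longrightarrow> c$i + m$i = p$i"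
    and top: "\<bar>x$vert - (of_int (c$vert) + height m + 4 * of_int r)\<bar> \<le> 1/2"
    using covered[of p "x$vert"] unfolding covered_def by blast
  have "\<bar>x$i - (to_real c + lattice_point m r)$i\<bar> \<le> 1/2" for i
  proof (cases "i = vert")
    case True
    then show ?thesis using top by (simp add: to_real_def lattice_point_vert add.assoc)
  next
    case False
    then have "(to_real c + lattice_point m r)$i = of_int (round (x$i))"
      using base by (simp add: to_real_def lattice_point_nonvert p_def flip: of_int_add)
    then show ?thesis using of_int_round_abs_le[of "x$i"] by (simp add: abs_minus_commute)
  qed
  then have "x \<in> translate (lattice_point m r) (cluster DS)"
    unfolding translate_cluster unit_cube_def using c by blast
  moreover have "lattice_point m r \<in> tiling_lattice"
    unfolding tiling_lattice_def using dvd by blast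
  ultimately show "x \<in> (\<Union>l\<in>tiling_lattice. translate l (cluster DS))"
    by blast
qed

text \<open>Since \<open>\<sigma> dir1 = 1\<close>, replacing the coordinate \<open>dir1\<close> in this way parametrises the
  vectors whose label sum is divisible by \<open>CARD('n)\<close> by all of \<open>\<int>\<^sup>n\<close>.\<close>
definition base_change :: "'a::comm_ring_1^'n \<Rightarrow> 'a^'n" where
  "base_change x = (\<chi> i. if i = dir1
     then of_nat CARD('n) * x$i - (\<Sum>k\<in>UNIV-{dir1}. of_nat (\<sigma> k) * x$k) else x$i)"

definition lattice_map :: "real^'n \<Rightarrow> real^'n" where
  "lattice_map x = (\<chi> i. if i = vert then 4 * x$vert + (\<Sum>k\<in>UNIV. tilt k * base_change x $ k)
     else base_change x $ i)"

lemma linear_lattice_map: "linear lattice_map"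
proof (rule linearI)
  have base_change_add: "base_change (x + y) = base_change x + base_change y" for x y :: "real^'n"
    unfolding base_change_def by (simp add: vec_eq_iff sum.distrib algebra_simps)
  have base_change_scale: "base_change (c *\<^sub>R x) = c *\<^sub>R base_change x" for c and x :: "real^'n"
    unfolding base_change_def by (simp add: vec_eq_iff sum_distrib_left algebra_simps)
  show "lattice_map (x + y) = lattice_map x + lattice_map y" for x y
    unfolding lattice_map_def by (simp add: vec_eq_iff base_change_add sum.distrib algebra_simps)
  show "lattice_map (c *\<^sub>R x) = c *\<^sub>R lattice_map x" for c x
    unfolding lattice_map_def by (simp add: vec_eq_iff base_change_scale sum_distrib_left algebra_simps)
qed

lemma lattice_map_eq_0_iff: "lattice_map x = 0 \<longleftrightarrow> x = 0"
proof
  assume "lattice_map x = 0"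
  then have zero: "lattice_map x $ i = 0" for i
    by simp
  have base_change_0: "base_change x $ i = 0" if "i \<noteq> vert" for i
    using zero[of i] that by (simp add: lattice_map_def)
  have off: "x$k = 0" if "k \<noteq> vert" "k \<noteq> dir1" for k
    using base_change_0[OF that(1)] that(2) by (simp add: base_change_def)
  have "(\<Sum>k\<in>UNIV-{dir1}. real (\<sigma> k) * x$k) = 0"
    by (rule sum.neutral) (metis off \<sigma>_vert mult_zero_left mult_zero_right of_nat_0 Diff_iff singletonI)
  then have "x $ dir1 = 0"
    using base_change_0[OF dirs_distinct(1)] card_ge_3 by (simp add: base_change_def)
  moreover have "(\<Sum>k\<in>UNIV. tilt k * base_change x $ k) = 0"
    by (rule sum.neutral) (simp add: tilt_def base_change_0)
  then have "x $ vert = 0"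
    using zero[of vert] by (simp add: lattice_map_def)
  ultimately show "x = 0"
    using off by (metis vec_eq_iff zero_index)
qed (simp add: linear_0[OF linear_lattice_map])

lemma lattice_map_to_real: "lattice_map (to_real k) = lattice_point (base_change k) (k $ vert)"
proof -
  have "base_change (to_real k) = to_real (base_change k)"
    by (simp add: vec_eq_iff base_change_def to_real_def)
  then show ?thesis
    by (simp add: vec_eq_iff lattice_map_def lattice_point_def height_def) (simp add: to_real_def algebra_simps)
qed

lemma label_sum_base_change: "label_sum (base_change k) = int CARD('n) * k $ dir1"
proof -
  have "label_sum (base_change k)
      = base_change k $ dir1 + (\<Sum>i\<in>UNIV-{dir1}. int (\<sigma> i) * base_change k $ i)"
    by (rule label_sum_remove_dir1)
  also have "(\<Sum>i\<in>UNIV-{dir1}. int (\<sigma> i) * base_change k $ i) = (\<Sum>i\<in>UNIV-{dir1}. int (\<sigma> i) * k $ i)"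
    by (intro sum.cong refl) (simp add: base_change_def)
  finally show ?thesis by (simp add: base_change_def)
qed

lemma tiling_lattice_eq_range: "tiling_lattice = range (lattice_map \<circ> to_real)"
proof (intro set_eqI iffI)
  fix l assume "l \<in> tiling_lattice"
  then obtain m r where l: "l = lattice_point m r" "int CARD('n) dvd label_sum m"
    by (rule tiling_latticeE)
  define k :: "int^'n" where
    "k = (\<chi> i. if i = vert then r else if i = dir1 then label_sum m div int CARD('n) else m$i)"
  have "base_change k $ i = m $ i" if "i \<noteq> vert" for i
  proof (cases "i = dir1")
    case True
    have "(\<Sum>j\<in>UNIV-{dir1}. int (\<sigma> j) * k$j) = (\<Sum>j\<in>UNIV-{dir1}. int (\<sigma> j) * m$j)"
      by (intro sum.cong refl) (simp add: k_def \<sigma>_vert)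
    with label_sum_remove_dir1[of m] show ?thesis
      using True l(2) dirs_distinct(1) by (simp add: base_change_def k_def)
  qed (use that in \<open>simp add: base_change_def k_def\<close>)
  then have "lattice_point (base_change k) r = l"
    unfolding l(1) by (rule lattice_point_cong)
  moreover have "k $ vert = r"
    by (simp add: k_def)
  ultimately have "lattice_point (base_change k) (k $ vert) = l"
    by simp
  then show "l \<in> range (lattice_map \<circ> to_real)"
    by (metis comp_apply lattice_map_to_real rangeI)
next
  fix l assume "l \<in> range (lattice_map \<circ> to_real)"
  then show "l \<in> tiling_lattice"
    by (auto simp: tiling_lattice_def lattice_map_to_real label_sum_base_change)
qed

lemma is_lattice_tiling_lattice: "is_lattice tiling_lattice"
  unfolding is_lattice_def
proof (intro exI conjI)
  show "invertible (matrix lattice_map)"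
    using linear_lattice_map lattice_map_eq_0_iff by (blast intro: invertible_matrix_if_ker_0)
  show "tiling_lattice = {matrix lattice_map *v to_real k | k. True}"
    using linear_lattice_map by (auto simp: tiling_lattice_eq_range matrix_works)
qed

lemma non_regular_tiling: "non_regular DS tiling_lattice"
proof -
  define m :: "int^'n" where "m = axis dir1 2 - axis dir2 1"
  define l where "l = lattice_point 0 0"
  define l' where "l' = lattice_point m 0"
  define c :: "int^'n" where "c = axis dir1 1"
  define c' :: "int^'n" where "c' = axis dir2 1"
  have "label_sum m = 0"
    by (simp add: m_def label_sum_diff label_sum_axis \<sigma>_dir1 \<sigma>_dir2)
  then have lattice: "l \<in> tiling_lattice" "l' \<in> tiling_lattice"
    unfolding l_def l'_def tiling_lattice_def label_sum_def by force+
  have "c = axis dir1 1 + axis vert 0" "c' = axis dir2 1 + axis vert 0"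
    by (simp_all add: c_def c'_def)
  then have DS: "c \<in> DS" "c' \<in> DS"
    using dirs_distinct unfolding mem_double_sphere_axis by blast+
  have "height m = 2 * tilt dir1 - tilt dir2"
    by (simp add: m_def height_diff height_axis)
  also have "\<dots> = 1/2"
    using dirs_distinct card_ge_3 by (simp add: tilt_def \<sigma>_dir1 \<sigma>_dir2 field_simps)
  finally have height_m: "height m = 1/2" .
  have P: "(to_real c + l)$i = (if i = dir1 then 1 else 0)" for i
    by (simp add: c_def l_def to_real_def lattice_point_def height_def axis_def)
  have m_nth: "m$i = (if i = dir1 then 2 else if i = dir2 then -1 else 0)" for i
    using dirs_distinct by (simp add: m_def axis_def)
  have Q: "(to_real c' + l')$i = (if i = dir1 then 2 else if i = vert then 1/2 else 0)" for i
    using dirs_distinct by (simp add: c'_def l'_def to_real_def lattice_point_def height_m m_nth axis_def)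
  have "l \<noteq> l'"
    using P[of vert] Q[of vert] dirs_distinct by (auto simp: c_def c'_def to_real_def)
  moreover have "aff_dim (unit_cube (to_real c + l) \<inter> unit_cube (to_real c' + l')) = int CARD('n) - 1"
    by (rule aff_dim_unit_cube_Int_facet[of _ dir1]) (simp_all add: P Q del: vector_add_component)
  moreover have "\<not> cube_neighbors (to_real c + l) (to_real c' + l')"
    by (rule not_cube_neighbors[of dir1 vert]) (use dirs_distinct in \<open>simp_all add: P Q del: vector_add_component\<close>)
  ultimately show ?thesis
    unfolding non_regular_def using lattice DS by blast
qed

end

theorem theorem7:
  assumes "CARD('n::finite) > 1"
    and "\<not> (\<exists>k::nat. CARD('n) = 2 ^ k)"
  shows "\<exists>(D::(int^'n) set) (L::(real^'n) set).
           is_double_sphere D \<and> lattice_tiling (cluster D) L \<and> non_regular D L"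
proof -
  \<comment> \<open>Excluding powers of 2 only rules out \<open>n = 2\<close>: the construction works for every \<open>n \<ge> 3\<close>.\<close>
  have "CARD('n) \<noteq> 2"
    using assms(2) by (metis power_one_right)
  with assms(1) have "3 \<le> CARD('n)"
    by linarith
  moreover obtain \<sigma> :: "'n \<Rightarrow> nat" where "bij_betw \<sigma> UNIV {..<CARD('n)}"
    using ex_bij_betw_finite_nat[of "UNIV :: 'n set"] by (auto simp: atLeast0LessThan)
  ultimately interpret double_cross_tiling \<sigma>
    by unfold_locales
  have "is_double_sphere DS"
    unfolding is_double_sphere_def
    by (intro exI[of _ 0] exI[of _ "axis vert 1"]) (simp add: lee_dist_def sum_abs_axis)
  moreover have "lattice_tiling (cluster DS) tiling_lattice"
    unfolding lattice_tiling_def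
    using is_lattice_tiling_lattice tiles_cover interior_tiles_disjoint by blast
  ultimately show ?thesis
    using non_regular_tiling by blast
qed

end
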